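(* Let $0<\mu<L_{\max}^{-1}$ with $L_{\max}=\max_i\|A_i\|_2^2$, and let $\{x^n\}$ be generated by GAITA (as in the context) from any $x^0\in\mathbf{R}^N$. For $n\in\mathbf{N}$ let $i=(n\bmod N)+1$ and $\Delta(x^n,x^{n+1})=T_\lambda(x^n)-T_\lambda(x^{n+1})$. Then $\Delta(x^n,x^{n+1})=0$ if and only if $x_i^{n+1}=x_i^n$.
   Context: Let $A\in\mathbf{R}^{m\times N}$ have columns $A_1,\dots,A_N$, $y\in\mathbf{R}^m$, $\lambda>0$, $q\in(0,1)$, and $T_\lambda(x)=\frac12\|Ax-y\|_2^2+\lambda\sum_{i=1}^N|x_i|^q$. For a step size $\mu>0$ set $\tau_{\mu,q}=\frac{2-q}{2-2q}(2\lambda\mu(1-q))^{\frac{1}{2-q}}$ and $\eta_{\mu,q}=(2\lambda\mu(1-q))^{\frac{1}{2-q}}$. For $z\in\mathbf{R}$ let $prox_{\mu,\lambda|\cdot|^q}(z)=\arg\min_{v\in\mathbf{R}}\{\frac{(z-v)^2}{2\mu}+\lambda|v|^q\}$ (a single point when $|z|\neq\tau_{\mu,q}$). Define $\mathcal{T}(z,w)$ as the unique element of $prox_{\mu,\lambda|\cdot|^q}(z)$ if $|z|\neq\tau_{\mu,q}$, and, if $|z|=\tau_{\mu,q}$, as $sgn(z)\eta_{\mu,q}$ when $w\neq0$ and $0$ when $w=0$ ($sgn(0)=0$). GAITA: given $x^0\in\mathbf{R}^N$, for $n=0,1,2,\dots$ let $i=(n\bmod N)+1$, $z_i^n=x_i^n-\mu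 A_i^T(Ax^n-y)$, $x_i^{n+1}=\mathcal{T}(z_i^n,x_i^n)$, $x_j^{n+1}=x_j^n$ for $j\neq i$. *)

theory Defs
  imports Complex_Main
begin

(* Conventions: vectors in R^N are functions nat => real, only indices 0..N-1 matter;
   the matrix A in R^{m x N} is nat => nat => real, entry A r j for r < m, j < N.
   Paper index i = (n mod N) + 1 corresponds to 0-based index n mod N here. *)

definition Amul :: "(nat \<Rightarrow> nat \<Rightarrow> real) \<Rightarrow> nat \<Rightarrow> nat \<Rightarrow> (nat \<Rightarrow> real) \<Rightarrow> nat \<Rightarrow> real" where
  "Amul A m N x = (\<lambda>r. \<Sum>j<N. A r j * x j)"

definition Tlam :: "(nat \<Rightarrow> nat \<Rightarrow> real) \<Rightarrow> (nat \<Rightarrow> real) \<Rightarrow> real \<Rightarrow> real \<Rightarrow> nat \<Rightarrow> nat \<Rightarrow> (nat \<Rightarrow> real) \<Rightarrow> real" where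
  "Tlam A y lam q m N x =
     (1/2) * (\<Sum>r<m. (Amul A m N x r - y r)^2) + lam * (\<Sum>j<N. \<bar>x j\<bar> powr q)"

definition colnorm2 :: "(nat \<Rightarrow> nat \<Rightarrow> real) \<Rightarrow> nat \<Rightarrow> nat \<Rightarrow> real" where
  "colnorm2 A m i = (\<Sum>r<m. (A r i)^2)"

definition Lmax :: "(nat \<Rightarrow> nat \<Rightarrow> real) \<Rightarrow> nat \<Rightarrow> nat \<Rightarrow> real" where
  "Lmax A m N = Max ((\<lambda>i. colnorm2 A m i) ` {..<N})"

definition tau :: "real \<Rightarrow> real \<Rightarrow> real \<Rightarrow> real" where
  "tau mu lam q = (2 - q) / (2 - 2*q) * (2*lam*mu*(1 - q)) powr (1 / (2 - q))"

definition eta :: "real \<Rightarrow> real \<Rightarrow> real \<Rightarrow> real" where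
  "eta mu lam q = (2*lam*mu*(1 - q)) powr (1 / (2 - q))"

definition prox :: "real \<Rightarrow> real \<Rightarrow> real \<Rightarrow> real \<Rightarrow> real set" where
  "prox mu lam q z = {v. \<forall>w. (z - v)^2 / (2*mu) + lam * \<bar>v\<bar> powr q
                              \<le> (z - w)^2 / (2*mu) + lam * \<bar>w\<bar> powr q}"

definition Tmap :: "real \<Rightarrow> real \<Rightarrow> real \<Rightarrow> real \<Rightarrow> real \<Rightarrow> real" where
  "Tmap mu lam q z w =
     (if \<bar>z\<bar> \<noteq> tau mu lam q then (THE v. v \<in> prox mu lam q z)
      else if w \<noteq> 0 then sgn z * eta mu lam q else 0)"

definition gradc :: "(nat \<Rightarrow> nat \<Rightarrow> real) \<Rightarrow> (nat \<Rightarrow> real) \<Rightarrow> nat \<Rightarrow> nat \<Rightarrow> (nat \<Rightarrow> real) \<Rightarrow> nat \<Rightarrow> real" where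
  "gradc A y m N x i = (\<Sum>r<m. A r i * (Amul A m N x r - y r))"

primrec gaita :: "(nat \<Rightarrow> nat \<Rightarrow> real) \<Rightarrow> (nat \<Rightarrow> real) \<Rightarrow> real \<Rightarrow> real \<Rightarrow> real \<Rightarrow> nat \<Rightarrow> nat
                   \<Rightarrow> (nat \<Rightarrow> real) \<Rightarrow> nat \<Rightarrow> (nat \<Rightarrow> real)" where
  "gaita A y lam q mu m N x0 0 = x0"
| "gaita A y lam q mu m N x0 (Suc n) =
     (let x = gaita A y lam q mu m N x0 n; i = n mod N;
          z = x i - mu * gradc A y m N x i
      in x(i := Tmap mu lam q z (x i)))"

end

theory Submission imports Defs begin

text \<open>Along coordinate \<open>i\<close>, \<open>T\<^sub>\<lambda>\<close> is a quadratic of curvature \<open>\<parallel>A\<^sub>i\<parallel>\<^sup>2\<close> plus \<open>\<lambda>\<bar>x\<^sub>i\<bar>\<^sup>q\<close>,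
  hence majorized by the prox model \<open>(z - v)\<^sup>2/(2\<mu>) + \<lambda>\<bar>v\<bar>\<^sup>q\<close>, whose curvature is
  \<open>1/\<mu> > \<parallel>A\<^sub>i\<parallel>\<^sup>2\<close>. Any value that does not increase the model therefore lowers \<open>T\<^sub>\<lambda>\<close> by at
  least \<open>(1/\<mu> - \<parallel>A\<^sub>i\<parallel>\<^sup>2)/2\<close> times the squared change of the coordinate, so \<open>\<Delta> = 0\<close> forces
  the coordinate to stay. GAITA's value never increases the model: off the threshold
  \<open>\<bar>z\<bar> = \<tau>\<close> the scalar prox is a single minimizer (its uniqueness, needed to give meaning
  to the definite description in \<open>Tmap\<close>, comes from the convexity of the derivative of the
  model on \<open>(0, \<infinity>)\<close>), and at the threshold both \<open>0\<close> and \<open>sgn z \<cdot> \<eta>\<close> are minimizers.\<close>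

lemma Rolle_positive:
  fixes f f' :: "real \<Rightarrow> real"
  assumes "0 < a" "a < b" "f a = f b"
    and deriv: "\<And>x. 0 < x \<Longrightarrow> (f has_real_derivative f' x) (at x)"
  shows "\<exists>t. a < t \<and> t < b \<and> f' t = 0"
proof -
  have "continuous_on {a..b} f"
    by (rule DERIV_continuous_on[of _ _ f'], rule has_field_derivative_at_within, rule deriv)
      (use assms(1) in auto)
  moreover have "f differentiable (at x)" if "a < x" for x
    using deriv[of x] that assms(1) unfolding real_differentiable_def by auto
  ultimately obtain t where t: "a < t" "t < b" "(f has_real_derivative 0) (at t)"
    using Rolle[OF assms(2,3)] by blast
  moreover have "f' t = 0"
    using DERIV_unique[OF deriv t(3)] t(1) assms(1) by simp
  ultimately show ?thesis
    by blast
qed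

lemma powr_eq_mult_powr_minus_1: "0 < w \<Longrightarrow> w powr a = w * w powr (a - 1)"
  for w a :: real
  by (simp add: powr_mult_base)

locale lq_penalty =
  fixes c q :: real
  assumes c_pos: "0 < c" and q_pos: "0 < q" and q_less_1: "q < 1"
begin

definition F :: "real \<Rightarrow> real \<Rightarrow> real" where
  "F z v = (z - v)^2 / 2 + c * \<bar>v\<bar> powr q"

definition argmin :: "real \<Rightarrow> real set" where
  "argmin z = {v. \<forall>w. F z v \<le> F z w}"

text \<open>\<open>kink\<close> and \<open>thr\<close> are the paper's \<open>\<eta>\<close> and \<open>\<tau>\<close> for step size \<open>1\<close>; the prox of \<open>\<lambda>\<bar>\<cdot>\<bar>\<^sup>q\<close>
  with step \<open>\<mu>\<close> is that of \<open>(\<lambda>\<mu>)\<bar>\<cdot>\<bar>\<^sup>q\<close> with step \<open>1\<close>.\<close>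
definition kink :: real where
  "kink = (2 * c * (1 - q)) powr (1 / (2 - q))"

definition thr :: real where
  "thr = (2 - q) / (2 - 2 * q) * kink"

text \<open>If \<open>v \<noteq> 0\<close> has the sign of \<open>z\<close>, then \<open>F z v - F z 0 = \<bar>v\<bar> * (psi \<bar>v\<bar> - \<bar>z\<bar>)\<close>; since
  \<open>psi\<close> is minimal at \<open>kink\<close> with value \<open>thr\<close>, \<open>thr\<close> decides whether \<open>0\<close> is a minimizer.\<close>
definition psi :: "real \<Rightarrow> real" where
  "psi w = w / 2 + c * w powr (q - 1)"

lemma kink_pos: "0 < kink"
  using c_pos q_less_1 by (simp add: kink_def)

lemma thr_pos: "0 < thr"
  using kink_pos q_less_1 by (simp add: thr_def)

lemma kink_powr_q_minus_2: "kink powr (q - 2) = 1 / (2 * c * (1 - q))"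
proof -
  have "kink powr (2 - q) = 2 * c * (1 - q)"
    using c_pos q_less_1 by (simp add: kink_def powr_powr)
  moreover have "kink powr (q - 2) = 1 / kink powr (2 - q)"
    by (metis minus_diff_eq powr_minus_divide)
  ultimately show ?thesis
    by simp
qed

lemma psi_kink: "psi kink = thr"
proof -
  have "kink powr (q - 1) = kink * kink powr (q - 2)"
    using kink_pos powr_mult_base[of kink "q - 2"] by simp
  then have "c * kink powr (q - 1) = kink / (2 * (1 - q))"
    using c_pos q_less_1 by (simp add: kink_powr_q_minus_2 field_simps)
  then have "psi kink = kink / 2 + kink / (2 * (1 - q))"
    by (simp add: psi_def)
  also have "\<dots> = thr"
    using q_less_1 by (simp add: thr_def field_simps)
  finally show ?thesis .
qed

lemma psi_ge_thr:
  assumes w: "0 < w"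
  shows "thr \<le> psi w"
proof -
  have deriv: "(psi has_real_derivative 1/2 - c * (1 - q) * x powr (q - 2)) (at x)" if "0 < x" for x
    unfolding psi_def using that by (auto intro!: derivative_eq_intros simp: algebra_simps)
  have slope: "1/2 - c * (1 - q) * x powr (q - 2) = c * (1 - q) * (kink powr (q - 2) - x powr (q - 2))" for x
    using c_pos q_less_1 by (simp add: kink_powr_q_minus_2 field_simps)
  have cq: "0 < c * (1 - q)"
    using c_pos q_less_1 by simp
  have "psi kink \<le> psi w"
  proof (cases "w \<le> kink")
    case True
    show ?thesis
    proof (rule DERIV_nonpos_imp_nonincreasing[OF True])
      fix x assume x: "w \<le> x" "x \<le> kink"
      then have "kink powr (q - 2) \<le> x powr (q - 2)"
        using w q_less_1 by (intro powr_mono2') auto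
      then show "\<exists>y. (psi has_real_derivative y) (at x) \<and> y \<le> 0"
        using deriv[of x] x w cq unfolding slope by (auto intro!: mult_nonneg_nonpos)
    qed
  next
    case False
    show ?thesis
    proof (rule DERIV_nonneg_imp_nondecreasing[of kink w psi])
      show "kink \<le> w" using False by simp
      fix x assume x: "kink \<le> x" "x \<le> w"
      then have "x powr (q - 2) \<le> kink powr (q - 2)"
        using kink_pos q_less_1 by (intro powr_mono2') auto
      then show "\<exists>y. (psi has_real_derivative y) (at x) \<and> 0 \<le> y"
        using deriv[of x] x kink_pos cq unfolding slope by auto
    qed
  qed
  then show ?thesis
    by (simp add: psi_kink)
qed

lemma F_minus_F_zero: "F z v - F z 0 = v^2 / 2 - z * v + c * \<bar>v\<bar> powr q"
  by (simp add: F_def power2_diff diff_divide_distrib add_divide_distrib)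

lemma F_minus_F_zero_ge:
  assumes "v \<noteq> 0"
  shows "\<bar>v\<bar> * (thr - \<bar>z\<bar>) \<le> F z v - F z 0"
proof -
  have "\<bar>v\<bar> * (thr - \<bar>z\<bar>) \<le> \<bar>v\<bar> * (psi \<bar>v\<bar> - \<bar>z\<bar>)"
    using psi_ge_thr[of "\<bar>v\<bar>"] assms by (intro mult_left_mono) auto
  also have "\<dots> = v^2 / 2 - \<bar>z\<bar> * \<bar>v\<bar> + c * \<bar>v\<bar> powr q"
    using assms by (simp add: psi_def powr_eq_mult_powr_minus_1[where a = q] power2_eq_square algebra_simps)
  also have "\<dots> \<le> F z v - F z 0"
    unfolding F_minus_F_zero using abs_ge_self[of "z * v"] by (simp add: abs_mult)
  finally show ?thesis .
qed

lemma F_neg: "F (- z) (- v) = F z v"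
  by (simp add: F_def power2_commute)

lemma argmin_neg: "v \<in> argmin (- z) \<longleftrightarrow> - v \<in> argmin z"
proof -
  have "F (- z) u = F z (- u)" for u
    using F_neg[of z "- u"] by simp
  moreover have "(\<forall>w. F z (- v) \<le> F z (- w)) \<longleftrightarrow> (\<forall>w. F z (- v) \<le> F z w)"
    by (metis minus_minus)
  ultimately show ?thesis
    by (simp add: argmin_def)
qed

lemma argmin_below_thr:
  assumes "\<bar>z\<bar> < thr"
  shows "argmin z = {0}"
proof -
  have less: "F z 0 < F z v" if "v \<noteq> 0" for v
    using F_minus_F_zero_ge[OF that, of z] assms that
    by (smt (verit) mult_pos_pos zero_less_abs_iff)
  have "v \<in> argmin z \<longleftrightarrow> v = 0" for v
    unfolding argmin_def mem_Collect_eq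
    by (metis less linorder_not_le order_less_imp_le order_refl)
  then show ?thesis
    by auto
qed

lemma sgn_kink_in_argmin_at_thr:
  assumes z: "\<bar>z\<bar> = thr"
  shows "sgn z * kink \<in> argmin z"
proof -
  have z0: "z \<noteq> 0"
    using z thr_pos by auto
  have "F z (sgn z * kink) - F z 0 = kink * (psi kink - \<bar>z\<bar>)"
    using z0 kink_pos unfolding F_minus_F_zero
    by (cases "0 < z")
      (auto simp: psi_def powr_eq_mult_powr_minus_1[where a = q] abs_mult power2_eq_square algebra_simps)
  then have "F z (sgn z * kink) = F z 0"
    by (simp add: psi_kink z)
  moreover have "F z 0 \<le> F z w" for w
    using F_minus_F_zero_ge[of w z] z by (cases "w = 0") auto
  ultimately show ?thesis
    unfolding argmin_def by simp
qed

text \<open>On \<open>(0, \<infinity>)\<close> the derivative \<open>H\<close> of \<open>F z\<close> is strictly convex. Two positive minimizers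
  would give, with a critical point of \<open>F z\<close> between them (Rolle), three zeros of \<open>H\<close>
  and hence two zeros of the strictly increasing \<open>H'\<close>.\<close>
lemma argmin_positive_unique:
  assumes "0 < v1" "v1 < v2" and "v1 \<in> argmin z" and "v2 \<in> argmin z"
  shows False
proof -
  define G where "G x = (z - x)^2 / 2 + c * x powr q" for x :: real
  define H where "H x = x - z + c * q * x powr (q - 1)" for x :: real
  define H' where "H' x = 1 - c * q * (1 - q) * x powr (q - 2)" for x :: real
  have dG: "(G has_real_derivative H x) (at x)" if "0 < x" for x
    unfolding G_def H_def using that
    by (auto intro!: derivative_eq_intros simp: field_simps)
  have dH: "(H has_real_derivative H' x) (at x)" if "0 < x" for x
    unfolding H_def H'_def using that
    by (auto intro!: derivative_eq_intros simp: algebra_simps)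
  have G_F: "G x = F z x" if "0 < x" for x
    using that by (simp add: G_def F_def)
  have critical: "H u = 0" if u: "0 < u" "u \<in> argmin z" for u
  proof (rule DERIV_local_min[OF dG[OF u(1)] u(1)], intro allI impI)
    fix x assume "\<bar>u - x\<bar> < u"
    then show "G u \<le> G x"
      using u by (simp add: G_F argmin_def)
  qed
  have "G v1 = G v2"
    using assms by (simp add: G_F argmin_def order.antisym)
  then obtain t where t: "v1 < t" "t < v2" "H t = 0"
    using Rolle_positive[of v1 v2 G H] assms dG by blast
  obtain s1 where s1: "v1 < s1" "s1 < t" "H' s1 = 0"
    using Rolle_positive[of v1 t H H'] critical assms t dH by auto
  obtain s2 where s2: "t < s2" "H' s2 = 0"
    using Rolle_positive[of t v2 H H'] critical assms t dH by auto
  have "s2 powr (q - 2) < s1 powr (q - 2)"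
    using s1 s2 assms q_less_1 by (intro powr_less_mono2_neg) auto
  moreover have "0 < c * q * (1 - q)"
    using c_pos q_pos q_less_1 by simp
  ultimately have "H' s1 < H' s2"
    unfolding H'_def by (simp add: mult_strict_left_mono)
  then show False
    using s1 s2 by simp
qed

lemma argmin_nonempty:
  assumes "0 < z"
  shows "\<exists>u. u \<in> argmin z"
proof -
  have cont: "continuous_on {0..2*z} (F z)"
    unfolding F_def using q_pos by (intro continuous_intros continuous_on_powr') auto
  obtain u where u: "u \<in> {0..2*z}" "\<And>w. w \<in> {0..2*z} \<Longrightarrow> F z u \<le> F z w"
    using continuous_attains_inf[OF compact_Icc _ cont] assms by auto
  have far: "F z 0 < F z w" if "w \<notin> {0..2*z}" for w
  proof -
    have "\<bar>z\<bar> < \<bar>z - w\<bar>"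
      using that assms by auto
    then have "z^2 < (z - w)^2"
      by (metis abs_le_square_iff not_le power2_abs)
    moreover have "0 \<le> c * \<bar>w\<bar> powr q"
      using c_pos by simp
    ultimately show ?thesis
      by (simp add: F_def)
  qed
  have "F z u \<le> F z w" for w
  proof (cases "w \<in> {0..2*z}")
    case False
    then show ?thesis
      using far[OF False] u(2)[of 0] assms by auto
  qed (use u in blast)
  then show ?thesis
    unfolding argmin_def by blast
qed

lemma argmin_above_thr_positive:
  assumes z: "thr < z" and v: "v \<in> argmin z"
  shows "0 < v"
proof (rule ccontr)
  assume "\<not> 0 < v"
  then consider "v = 0" | "v < 0" by linarith
  then show False
  proof cases
    case 1
    have "F z kink - F z 0 = kink * (psi kink - z)"
      using kink_pos unfolding F_minus_F_zero
      by (simp add: psi_def powr_eq_mult_powr_minus_1[where a = q] power2_eq_square algebra_simps)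
    also have "\<dots> < 0"
      using kink_pos z by (simp add: psi_kink mult_pos_neg)
    finally show False
      using v 1 by (auto simp: argmin_def dest: spec[of _ kink])
  next
    case 2
    have "(z + v)^2 < (z - v)^2"
      using z thr_pos 2 by (simp add: power2_eq_square algebra_simps mult_neg_pos)
    then have "F z (- v) < F z v"
      by (simp add: F_def)
    then show False
      using v by (auto simp: argmin_def dest: spec[of _ "- v"])
  qed
qed

lemma argmin_above_thr_unique:
  assumes "thr < z"
  shows "\<exists>!v. v \<in> argmin z"
proof -
  obtain u where u: "u \<in> argmin z"
    using argmin_nonempty[of z] assms thr_pos by auto
  have "v = u" if v: "v \<in> argmin z" for v
  proof (rule linorder_cases[of v u])
    assume "v < u"
    then show ?thesis
      using argmin_positive_unique[OF argmin_above_thr_positive[OF assms v] _ v u] by blast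
  next
    assume "u < v"
    then show ?thesis
      using argmin_positive_unique[OF argmin_above_thr_positive[OF assms u] _ u v] by blast
  qed
  then show ?thesis
    using u by blast
qed

lemma argmin_unique:
  assumes "\<bar>z\<bar> \<noteq> thr"
  shows "\<exists>!v. v \<in> argmin z"
proof -
  consider "\<bar>z\<bar> < thr" | "thr < z" | "thr < - z"
    using assms by linarith
  then show ?thesis
  proof cases
    case 3
    then obtain v where "v \<in> argmin (- z)" "\<And>w. w \<in> argmin (- z) \<Longrightarrow> w = v"
      using argmin_above_thr_unique by blast
    then show ?thesis
      by (metis argmin_neg minus_minus)
  qed (auto simp: argmin_below_thr argmin_above_thr_unique)
qed

end

lemma Tmap_prox_descent:
  assumes "0 < mu" "0 < lam" "0 < q" "q < 1"
  shows "(z - Tmap mu lam q z w)^2 / (2*mu) + lam * \<bar>Tmap mu lam q z w\<bar> powr q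
           \<le> (z - w)^2 / (2*mu) + lam * \<bar>w\<bar> powr q"
proof -
  interpret lq_penalty "lam * mu" q
    using assms by unfold_locales simp_all
  have objective: "(z - v)^2 / (2*mu) + lam * \<bar>v\<bar> powr q = F z v / mu" for v
    using assms(1) by (simp add: F_def add_divide_distrib)
  have prox_argmin: "prox mu lam q z = argmin z"
    using assms(1) by (simp add: prox_def argmin_def objective divide_le_cancel)
  have tau_thr: "tau mu lam q = thr" and eta_kink: "eta mu lam q = kink"
    by (simp_all add: tau_def thr_def eta_def kink_def ac_simps)
  have "Tmap mu lam q z w \<in> prox mu lam q z \<or> Tmap mu lam q z w = w"
  proof (cases "\<bar>z\<bar> = thr")
    case False
    have "(THE v. v \<in> argmin z) \<in> argmin z"
      using argmin_unique[OF False] by (rule theI')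
    then show ?thesis
      using False by (simp add: Tmap_def tau_thr prox_argmin)
  next
    case True
    then show ?thesis
      using sgn_kink_in_argmin_at_thr
      by (simp add: Tmap_def tau_thr eta_kink prox_argmin)
  qed
  then show ?thesis
    by (auto simp: prox_def)
qed

lemma sum_fun_upd:
  fixes h :: "'a \<Rightarrow> 'b \<Rightarrow> real"
  assumes "finite A" "i \<in> A"
  shows "(\<Sum>j\<in>A. h j ((x(i := v)) j)) = (\<Sum>j\<in>A. h j (x j)) + (h i v - h i (x i))"
proof -
  have "(\<Sum>j\<in>A - {i}. h j ((x(i := v)) j)) = (\<Sum>j\<in>A - {i}. h j (x j))"
    by (rule sum.cong) auto
  then show ?thesis
    using sum.remove[OF assms, of "\<lambda>j. h j ((x(i := v)) j)"] sum.remove[OF assms, of "\<lambda>j. h j (x j)"]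
    by simp
qed

lemma Amul_fun_upd:
  "i < N \<Longrightarrow> Amul A m N (x(i := v)) r = Amul A m N x r + A r i * (v - x i)"
  using sum_fun_upd[of "{..<N}" i "\<lambda>j t. A r j * t" x v] by (simp add: Amul_def algebra_simps)

lemma Tlam_fun_upd:
  assumes "i < N"
  shows "Tlam A y lam q m N (x(i := v)) = Tlam A y lam q m N x + gradc A y m N x i * (v - x i)
           + colnorm2 A m i * (v - x i)^2 / 2 + lam * (\<bar>v\<bar> powr q - \<bar>x i\<bar> powr q)"
proof -
  let ?R = "\<lambda>r. Amul A m N x r - y r"
  have "(\<Sum>r<m. (Amul A m N (x(i := v)) r - y r)^2)
      = (\<Sum>r<m. ?R r ^ 2 + 2 * (v - x i) * (A r i * ?R r) + (v - x i)^2 * (A r i)^2)"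
    using assms by (intro sum.cong) (simp_all add: Amul_fun_upd power2_eq_square algebra_simps)
  also have "\<dots> = (\<Sum>r<m. ?R r ^ 2) + 2 * (v - x i) * gradc A y m N x i + (v - x i)^2 * colnorm2 A m i"
    by (simp add: sum.distrib sum_distrib_left gradc_def colnorm2_def)
  finally have residual: "(\<Sum>r<m. (Amul A m N (x(i := v)) r - y r)^2)
      = (\<Sum>r<m. ?R r ^ 2) + 2 * (v - x i) * gradc A y m N x i + (v - x i)^2 * colnorm2 A m i" .
  have penalty: "(\<Sum>j<N. \<bar>(x(i := v)) j\<bar> powr q) = (\<Sum>j<N. \<bar>x j\<bar> powr q) + (\<bar>v\<bar> powr q - \<bar>x i\<bar> powr q)"
    using assms by (intro sum_fun_upd) auto
  show ?thesis
    unfolding Tlam_def residual penalty by (simp add: algebra_simps)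
qed

lemma Tlam_coordinate_sufficient_decrease:
  assumes "i < N" "0 < mu"
    and z: "z = x i - mu * gradc A y m N x i"
    and model: "(z - v)^2 / (2*mu) + lam * \<bar>v\<bar> powr q \<le> (z - x i)^2 / (2*mu) + lam * \<bar>x i\<bar> powr q"
  shows "(1/mu - colnorm2 A m i) / 2 * (v - x i)^2
           \<le> Tlam A y lam q m N x - Tlam A y lam q m N (x(i := v))"
proof -
  define g where "g = gradc A y m N x i"
  define d where "d = v - x i"
  have "(z - v)^2 / (2*mu) - (z - x i)^2 / (2*mu) = d^2 / (2*mu) + g * d"
    using assms(2) by (simp add: z g_def d_def field_simps power2_eq_square)
  then have "d^2 / (2*mu) + g * d + lam * (\<bar>v\<bar> powr q - \<bar>x i\<bar> powr q) \<le> 0"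
    using model by (simp add: algebra_simps)
  moreover have "(1/mu - colnorm2 A m i) / 2 * d^2 = d^2 / (2*mu) - colnorm2 A m i * d^2 / 2"
    using assms(2) by (simp add: field_simps)
  ultimately show ?thesis
    using Tlam_fun_upd[OF assms(1), of A y lam q m x v] by (simp add: g_def d_def)
qed

theorem lemma2:
  fixes A :: "nat \<Rightarrow> nat \<Rightarrow> real" and y x0 :: "nat \<Rightarrow> real"
    and lam q mu :: real and m N n :: nat
  assumes "N \<ge> 1"
    and "lam > 0" and "0 < q" and "q < 1"
    and "0 < mu" and "mu * Lmax A m N < 1"
  shows "(Tlam A y lam q m N (gaita A y lam q mu m N x0 n)
            - Tlam A y lam q m N (gaita A y lam q mu m N x0 (Suc n)) = 0)
         \<longleftrightarrow> gaita A y lam q mu m N x0 (Suc n) (n mod N) = gaita A y lam q mu m N x0 n (n mod N)"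
proof -
  define x where "x = gaita A y lam q mu m N x0 n"
  define i where "i = n mod N"
  define z where "z = x i - mu * gradc A y m N x i"
  define v where "v = Tmap mu lam q z (x i)"
  have i: "i < N"
    using assms(1) by (simp add: i_def)
  have step: "gaita A y lam q mu m N x0 (Suc n) = x(i := v)"
    by (simp add: x_def i_def z_def v_def Let_def)
  have "colnorm2 A m i \<le> Lmax A m N"
    unfolding Lmax_def using i by (intro Max_ge) auto
  from mult_left_mono[OF this, of mu] have "mu * colnorm2 A m i < 1"
    using assms(5,6) by linarith
  then have curvature: "0 < (1/mu - colnorm2 A m i) / 2"
    using assms(5) by (simp add: field_simps)
  have "(z - v)^2 / (2*mu) + lam * \<bar>v\<bar> powr q \<le> (z - x i)^2 / (2*mu) + lam * \<bar>x i\<bar> powr q"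
    unfolding v_def using assms(5,2,3,4) by (rule Tmap_prox_descent)
  from Tlam_coordinate_sufficient_decrease[OF i assms(5) z_def this]
  have decrease: "(1/mu - colnorm2 A m i) / 2 * (v - x i)^2
                   \<le> Tlam A y lam q m N x - Tlam A y lam q m N (x(i := v))" .
  have "Tlam A y lam q m N x - Tlam A y lam q m N (x(i := v)) = 0 \<longleftrightarrow> v = x i"
  proof
    assume "Tlam A y lam q m N x - Tlam A y lam q m N (x(i := v)) = 0"
    then show "v = x i"
      using decrease curvature by (simp add: mult_le_0_iff)
  qed simp
  then show ?thesis
    unfolding step x_def[symmetric] i_def[symmetric] by simp
qed

end
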